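(* Let $p$ be a positive random partition ($p_N(\pi)>0$ for all $N,\pi$) that generates the potential for TU games, and let $r^p$ be the restriction operator $$w^{r^p}_{-i}(S,\pi)=\frac{n}{n-s}\sum_{B\in\pi\cup\{\emptyset\}}\frac{p_N(\{S\}\cup\pi_{+i\leadsto B})}{p_{N\setminus\{i\}}(\{S\}\cup\pi)}\,w(S,\pi_{+i\leadsto B}).$$ Then (i) the $r^p$-Shapley value equals the $p$-Shapley value, $\mathrm{Sh}^{r^p}=\mathrm{Sh}^p$, where $$\mathrm{Sh}^p_i(w)=\sum_{(T,\tau)\in\mathcal{E}(N\setminus\{i\})}\Big(p_N(\{T\cup\{i\}\}\cup\tau)\,w(T\cup\{i\},\tau)-\frac{t}{n-t}\sum_{B\in\tau\cup\{\emptyset\}}p_N(\{T\}\cup\tau_{+i\leadsto B})\,w(T,\tau_{+i\leadsto B})\Big);$$ (ii) for TU games, $\mathrm{Sh}^{r^p}(v)=\mathrm{Sh}(v)$ for all $N\subseteq\mathbf{U}$ and all TU games $v$ on $N$.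
   Context: $\mathbf{U}$ is a finite set of players; cardinalities of $N,S,T,B$ are $n,s,t,b$. $\Pi(N)$ is the set of partitions of $N$ ($\Pi(\emptyset)=\{\emptyset\}$). A random partition is $p=(p_N)_{N\subseteq\mathbf{U}}$ with $p_N$ a probability distribution on $\Pi(N)$. $\pi_{+i\leadsto B}=(\pi\setminus\{B\})\cup\{B\cup\{i\}\}$ for $B\in\pi$, and $\pi_{+i\leadsto\emptyset}=\pi\cup\{\{i\}\}$. TU game on $N$: $v:2^N\to\mathbb{R}$, $v(\emptyset)=0$. Shapley value: $\mathrm{Sh}_i(v)=\sum_{S\subseteq N\setminus\{i\}}\frac{s!(n-s-1)!}{n!}(v(S\cup\{i\})-v(S))$. Potential: $\mathrm{Pot}(v)=\sum_{\emptyset\ne S\subseteq N}\frac{(s-1)!(n-s)!}{n!}v(S)$. Embedded coalitions $\mathcal{E}(N)=\{(S,\pi):S\subseteq N,\pi\in\Pi(N\setminus S)\}$. A TUX game on $N$ is $w:\mathcal{E}(N)\to\mathbb{R}$ with $w(\emptyset,\pi)=0$; $\mathbb{W}(N)$ is their set; a TU game $v$ is identified with the TUX game $w(S,\pi)=v(S)$. $\mathrm{E}_p(w)=\sum_{\pi\in\Pi(N)}p_N(\pi)\sum_{S\in\pi}w(S,\pi\setminus\{S\})$; $p$ generates the potential for TU games if $\mathrm{E}_p(v)=\mathrm{Pot}(v)$ for all TU games $v$. The formula for $w^{r^p}_{-i}$ is for all $N\subseteq\mathbf{U}$, $w\in\mathbb{W}(N)$, $i\in N$, $(S,\pi)\in\mathcal{E}(N\setminus\{i\})$,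 and defines $w^{r^p}_{-i}\in\mathbb{W}(N\setminus\{i\})$; this operator is path independent ($(w_{-i})_{-j}=(w_{-j})_{-i}$), so removal of a set $T$ of players, $w^{r^p}_{-T}$, is well defined. For such a path independent restriction operator $r$, the $r$-Shapley value is $\mathrm{Sh}^r(w)=\mathrm{Sh}(v^r_w)$, where $v^r_w(S)=w^r_{-(N\setminus S)}(S,\emptyset)$ for $S\subseteq N$. *)

theory Defs
  imports Complex_Main "HOL-Library.Disjoint_Sets"
begin

text \<open>Players form a finite type 'a (the universe U = UNIV).
A TUX game on N is a function w of a coalition S and a partition pi of N - S.\<close>

type_synonym 'a rpart = "'a set \<Rightarrow> 'a set set \<Rightarrow> real"
type_synonym 'a tux = "'a set \<Rightarrow> 'a set set \<Rightarrow> real"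

definition Parts :: "'a set \<Rightarrow> 'a set set set" where
  "Parts N = {\<pi>. partition_on N \<pi>}"

definition emb_coal :: "'a set \<Rightarrow> ('a set \<times> 'a set set) set" where
  "emb_coal N = {(S, \<pi>). S \<subseteq> N \<and> \<pi> \<in> Parts (N - S)}"

definition tux_game :: "'a set \<Rightarrow> 'a tux \<Rightarrow> bool" where
  "tux_game N w \<longleftrightarrow> (\<forall>\<pi> \<in> Parts N. w {} \<pi> = 0)"

definition tu_game :: "'a set \<Rightarrow> ('a set \<Rightarrow> real) \<Rightarrow> bool" where
  "tu_game N v \<longleftrightarrow> v {} = 0"

definition tu_as_tux :: "('a set \<Rightarrow> real) \<Rightarrow> 'a tux" where
  "tu_as_tux v = (\<lambda>S \<pi>. v S)"

definition random_partition :: "'a rpart \<Rightarrow> bool" where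
  "random_partition p \<longleftrightarrow>
     (\<forall>N. (\<forall>\<pi> \<in> Parts N. p N \<pi> \<ge> 0) \<and> (\<Sum>\<pi> \<in> Parts N. p N \<pi>) = 1)"

definition positive_rp :: "'a rpart \<Rightarrow> bool" where
  "positive_rp p \<longleftrightarrow> (\<forall>N. \<forall>\<pi> \<in> Parts N. p N \<pi> > 0)"

definition add_to :: "'a set set \<Rightarrow> 'a \<Rightarrow> 'a set \<Rightarrow> 'a set set" where
  "add_to \<pi> i B = (if B = {} then insert {i} \<pi> else insert (insert i B) (\<pi> - {B}))"

definition expect :: "'a rpart \<Rightarrow> 'a set \<Rightarrow> 'a tux \<Rightarrow> real" where
  "expect p N w = (\<Sum>\<pi> \<in> Parts N. p N \<pi> * (\<Sum>S \<in> \<pi>. w S (\<pi> - {S})))"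

definition Pot :: "'a set \<Rightarrow> ('a set \<Rightarrow> real) \<Rightarrow> real" where
  "Pot N v = (\<Sum>S \<in> {S. S \<subseteq> N \<and> S \<noteq> {}}.
      real (fact (card S - 1) * fact (card N - card S)) / real (fact (card N)) * v S)"

definition generates_potential :: "'a rpart \<Rightarrow> bool" where
  "generates_potential p \<longleftrightarrow>
     (\<forall>N v. tu_game N v \<longrightarrow> expect p N (tu_as_tux v) = Pot N v)"

definition Shapley :: "'a set \<Rightarrow> ('a set \<Rightarrow> real) \<Rightarrow> 'a \<Rightarrow> real" where
  "Shapley N v i = (\<Sum>S \<in> Pow (N - {i}).
      real (fact (card S) * fact (card N - card S - 1)) / real (fact (card N))
      * (v (insert i S) - v S))"

text \<open>The restriction operator r^p: removal of player i from a TUX game on N.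
For S = {} the value is 0 (the result is a TUX game, w(emptyset, pi) = 0).\<close>
definition restr_p :: "'a rpart \<Rightarrow> 'a set \<Rightarrow> 'a tux \<Rightarrow> 'a \<Rightarrow> 'a tux" where
  "restr_p p N w i = (\<lambda>S \<pi>. if S = {} then 0 else
      real (card N) / (real (card N) - real (card S)) *
      (\<Sum>B \<in> insert {} \<pi>.
         p N (insert S (add_to \<pi> i B)) / p (N - {i}) (insert S \<pi>) * w S (add_to \<pi> i B)))"

fun remove_list :: "'a rpart \<Rightarrow> 'a set \<Rightarrow> 'a tux \<Rightarrow> 'a list \<Rightarrow> 'a tux" where
  "remove_list p N w [] = w"
| "remove_list p N w (i # is) = remove_list p (N - {i}) (restr_p p N w i) is"

text \<open>Removal of a set T (well defined by path independence; an arbitrary order is chosen).\<close>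
definition remove_set :: "'a rpart \<Rightarrow> 'a set \<Rightarrow> 'a tux \<Rightarrow> 'a set \<Rightarrow> 'a tux" where
  "remove_set p N w T = remove_list p N w (SOME xs. set xs = T \<and> distinct xs)"

definition v_restr :: "'a rpart \<Rightarrow> 'a set \<Rightarrow> 'a tux \<Rightarrow> 'a set \<Rightarrow> real" where
  "v_restr p N w S = remove_set p N w (N - S) S {}"

definition Shapley_r :: "'a rpart \<Rightarrow> 'a set \<Rightarrow> 'a tux \<Rightarrow> 'a \<Rightarrow> real" where
  "Shapley_r p N w i = Shapley N (v_restr p N w) i"

definition Shapley_p :: "'a rpart \<Rightarrow> 'a set \<Rightarrow> 'a tux \<Rightarrow> 'a \<Rightarrow> real" where
  "Shapley_p p N w i = (\<Sum>(T, \<tau>) \<in> emb_coal (N - {i}).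
      p N (insert (insert i T) \<tau>) * w (insert i T) \<tau>
      - real (card T) / (real (card N) - real (card T)) *
        (\<Sum>B \<in> insert {} \<tau>. p N (insert T (add_to \<tau> i B)) * w T (add_to \<tau> i B)))"

end

theory Submission
  imports Defs
begin

text \<open>
  Removing players one at a time, the factors \<open>n / (n - s)\<close> and the probability ratios of
  \<^const>\<open>restr_p\<close> telescope. By induction on the list \<open>xs\<close> of removed players, the game left on
  \<open>S\<close> at a partition \<open>\<pi>\<close> of the other remaining players, multiplied by \<open>p\<^bsub>N - xs\<^esub>({S} \<union> \<pi>)\<close>, is
  \<open>C(n, k) / C(n - s, k)\<close> times the sum of \<open>p\<^sub>N({S} \<union> \<sigma>) w(S, \<sigma>)\<close> over the partitions \<open>\<sigma>\<close> of
  \<open>N - S\<close> whose trace on those players is \<open>\<pi>\<close>. The induction step rests on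
  \<open>(\<tau>, B) \<mapsto> \<tau>\<^sub>+\<^sub>i\<^sub>\<leadsto>\<^sub>B\<close> being a bijection from the pairs of a partition \<open>\<tau>\<close> of \<open>M\<close> and
  \<open>B \<in> \<tau> \<union> {\<emptyset>}\<close> onto the partitions of \<open>M \<union> {i}\<close>. The result depends on \<open>xs\<close> only through
  its set.

  Removing all of \<open>N - S\<close> thus gives \<open>v(S) = E[w(S, \<cdot>) | S is a block]\<close>, because generating the
  potential forces the probability that \<open>S\<close> is a block to be the potential coefficient
  \<open>(s - 1)! (n - s)! / n!\<close> (so \<open>p\<^sub>S({S}) = 1 / s\<close>). For a TU game this conditional expectation is
  \<open>v(S)\<close>. In general the Shapley weight of \<open>T \<union> {i}\<close> is its block probability and the weight
  of \<open>T\<close> is \<open>t / (n - t)\<close> times the block probability of \<open>T\<close>, which turns \<open>Sh(v\<^sup>r\<^sub>w)\<close>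
  into \<open>Sh\<^sup>p(w)\<close>.
\<close>

lemma insert_block_in_Parts:
  assumes "S \<noteq> {}" "S \<subseteq> N" "\<sigma> \<in> Parts (N - S)"
  shows "insert S \<sigma> \<in> Parts N"
proof -
  have "disjnt S (\<Union>\<sigma>)"
    using assms(3) by (auto simp: Parts_def partition_on_def disjnt_def)
  then show ?thesis
    using partition_on_insert[of S \<sigma> N] assms by (simp add: Parts_def)
qed

lemma block_notin_Parts_Diff:
  assumes "S \<noteq> {}" "\<sigma> \<in> Parts (N - S)"
  shows "S \<notin> \<sigma>"
  using assms by (auto simp: Parts_def partition_on_def)

lemma remove_block_in_Parts:
  assumes "\<pi> \<in> Parts N" "S \<in> \<pi>"
  shows "\<pi> - {S} \<in> Parts (N - S)"
proof -
  have pi: "partition_on N \<pi>"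
    using assms(1) by (simp add: Parts_def)
  have "disjnt S (\<Union>(\<pi> - {S}))"
    using partition_onD2[OF pi] assms(2) by (auto simp: disjnt_def disjoint_def)
  moreover have "insert S (\<pi> - {S}) = \<pi>"
    using assms(2) by auto
  ultimately show ?thesis
    using partition_on_insert pi by (metis Parts_def mem_Collect_eq)
qed

lemma bij_betw_insert_block:
  assumes "S \<noteq> {}" "S \<subseteq> N"
  shows "bij_betw (insert S) (Parts (N - S)) {\<pi> \<in> Parts N. S \<in> \<pi>}"
proof (rule bij_betw_byWitness[where f' = "\<lambda>\<pi>. \<pi> - {S}"])
  show "\<forall>\<sigma>\<in>Parts (N - S). insert S \<sigma> - {S} = \<sigma>"
    using block_notin_Parts_Diff[OF assms(1)] by auto
  show "insert S ` Parts (N - S) \<subseteq> {\<pi> \<in> Parts N. S \<in> \<pi>}"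
    using insert_block_in_Parts[OF assms] by auto
  show "(\<lambda>\<pi>. \<pi> - {S}) ` {\<pi> \<in> Parts N. S \<in> \<pi>} \<subseteq> Parts (N - S)"
    using remove_block_in_Parts by auto
qed auto

lemma the_block_eq:
  assumes "\<sigma> \<in> Parts X" "C \<in> \<sigma>" "i \<in> C"
  shows "(THE C. C \<in> \<sigma> \<and> i \<in> C) = C"
proof (rule the_equality)
  show "C \<in> \<sigma> \<and> i \<in> C"
    using assms by auto
  fix D assume "D \<in> \<sigma> \<and> i \<in> D"
  then show "D = C"
    using assms partition_onD2[of X \<sigma>] by (auto simp: Parts_def disjoint_def)
qed

lemma proper_subset_notin_Parts:
  assumes "\<sigma> \<in> Parts X" "C \<in> \<sigma>" "D \<subset> C" "D \<noteq> {}"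
  shows "D \<notin> \<sigma>"
proof
  assume "D \<in> \<sigma>"
  then have "D \<inter> C = {}"
    using disjointD[OF partition_onD2, of X \<sigma> D C] assms by (auto simp: Parts_def)
  then show False
    using assms(3,4) by blast
qed

lemma add_to_in_Parts:
  assumes "i \<notin> M" "\<tau> \<in> Parts M" "B \<in> insert {} \<tau>"
  shows "add_to \<tau> i B \<in> Parts (insert i M)"
proof (cases "B = {}")
  case True
  have "insert i M - {i} = M"
    using assms(1) by auto
  then show ?thesis
    using True insert_block_in_Parts[of "{i}" "insert i M" \<tau>] assms(2)
    by (simp add: add_to_def)
next
  case False
  then have B: "B \<in> \<tau>"
    using assms(3) by auto
  have U: "\<Union>\<tau> = M"
    using assms(2) by (simp add: Parts_def partition_on_def)
  have "insert i M - insert i B = M - B"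
    using assms(1) by auto
  then have "\<tau> - {B} \<in> Parts (insert i M - insert i B)"
    using remove_block_in_Parts[OF assms(2) B] by simp
  then show ?thesis
    using False insert_block_in_Parts[of "insert i B" "insert i M" "\<tau> - {B}"] B U
    by (auto simp: add_to_def)
qed

definition split_off :: "'a \<Rightarrow> 'a set set \<Rightarrow> 'a set set \<times> 'a set" where
  "split_off i \<sigma> = (let C = (THE C. C \<in> \<sigma> \<and> i \<in> C) in
     ((\<sigma> - {C}) \<union> (if C = {i} then {} else {C - {i}}), C - {i}))"

lemma split_off_add_to:
  assumes "i \<notin> M" "\<tau> \<in> Parts M" "B \<in> insert {} \<tau>"
  shows "split_off i (add_to \<tau> i B) = (\<tau>, B)"
proof (cases "B = {}")
  case True
  have "(THE C. C \<in> insert {i} \<tau> \<and> i \<in> C) = {i}"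
    using the_block_eq[of "insert {i} \<tau>" "insert i M" "{i}" i] add_to_in_Parts[OF assms] True
    by (simp add: add_to_def)
  moreover have "{i} \<notin> \<tau>"
    using assms(1,2) by (auto simp: Parts_def partition_on_def)
  ultimately show ?thesis
    using True by (simp add: add_to_def split_off_def Let_def)
next
  case False
  then have B: "B \<in> \<tau>"
    using assms(3) by auto
  have U: "\<Union>\<tau> = M"
    using assms(2) by (simp add: Parts_def partition_on_def)
  have add: "add_to \<tau> i B = insert (insert i B) (\<tau> - {B})"
    using False by (simp add: add_to_def)
  have "(THE C. C \<in> add_to \<tau> i B \<and> i \<in> C) = insert i B"
    using the_block_eq[of "add_to \<tau> i B" "insert i M" "insert i B" i] add_to_in_Parts[OF assms] add
    by simp
  moreover have "insert i B \<notin> \<tau>" "insert i B \<noteq> {i}" "insert i B - {i} = B"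
    using False B U assms(1) by auto
  ultimately show ?thesis
    using add B by (auto simp: split_off_def Let_def)
qed

lemma add_to_split_off:
  assumes "i \<notin> M" "\<sigma> \<in> Parts (insert i M)"
  obtains \<tau> B where "split_off i \<sigma> = (\<tau>, B)" "\<tau> \<in> Parts M" "B \<in> insert {} \<tau>" "add_to \<tau> i B = \<sigma>"
proof -
  have pa: "partition_on (insert i M) \<sigma>"
    using assms by (simp add: Parts_def)
  obtain C where C: "C \<in> \<sigma>" "i \<in> C"
    using partition_onD1[OF pa] by auto
  have the: "(THE C. C \<in> \<sigma> \<and> i \<in> C) = C"
    using the_block_eq[OF assms(2) C] .
  have rest: "\<sigma> - {C} \<in> Parts (insert i M - C)"
    using remove_block_in_Parts[OF assms(2) C(1)] .
  show ?thesis
  proof (cases "C = {i}")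
    case True
    have "insert i M - C = M"
      using True assms(1) by auto
    moreover have "add_to (\<sigma> - {C}) i {} = \<sigma>"
      using True C by (auto simp: add_to_def)
    ultimately show ?thesis
      using that[of "\<sigma> - {C}" "{}"] the True rest by (simp add: split_off_def Let_def)
  next
    case False
    have ne: "C - {i} \<noteq> {}"
      using False C by auto
    have "C \<subseteq> insert i M" "M - (C - {i}) = insert i M - C"
      using partition_onD1[OF pa] C assms(1) by auto
    then have P: "insert (C - {i}) (\<sigma> - {C}) \<in> Parts M"
      using insert_block_in_Parts[OF ne, of M "\<sigma> - {C}"] rest by auto
    have "C - {i} \<notin> \<sigma>"
      using proper_subset_notin_Parts[OF assms(2) C(1) _ ne] C(2) by blast
    then have "add_to (insert (C - {i}) (\<sigma> - {C})) i (C - {i}) = insert C (\<sigma> - {C})"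
      using ne C by (auto simp: add_to_def insert_absorb)
    also have "\<dots> = \<sigma>"
      using C by auto
    finally show ?thesis
      using that[of "insert (C - {i}) (\<sigma> - {C})" "C - {i}"] the False P
      by (simp add: split_off_def Let_def)
  qed
qed

lemma bij_betw_add_to:
  assumes "i \<notin> M"
  shows "bij_betw (\<lambda>(\<tau>, B). add_to \<tau> i B) (SIGMA \<tau>:Parts M. insert {} \<tau>) (Parts (insert i M))"
proof (rule bij_betw_byWitness[where f' = "split_off i"])
  show "\<forall>x\<in>SIGMA \<tau>:Parts M. insert {} \<tau>. split_off i (case x of (\<tau>, B) \<Rightarrow> add_to \<tau> i B) = x"
    using split_off_add_to[OF assms] by auto
  show "\<forall>\<sigma>\<in>Parts (insert i M). (case split_off i \<sigma> of (\<tau>, B) \<Rightarrow> add_to \<tau> i B) = \<sigma>"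
    by (metis add_to_split_off[OF assms] case_prod_conv)
  show "(\<lambda>(\<tau>, B). add_to \<tau> i B) ` (SIGMA \<tau>:Parts M. insert {} \<tau>) \<subseteq> Parts (insert i M)"
    using add_to_in_Parts[OF assms] by auto
  show "split_off i ` Parts (insert i M) \<subseteq> (SIGMA \<tau>:Parts M. insert {} \<tau>)"
    by (auto elim: add_to_split_off[OF assms])
qed

lemma sum_Parts_insert:
  fixes f :: "'a::finite set set \<Rightarrow> real"
  assumes "i \<notin> M"
  shows "(\<Sum>\<tau>\<in>Parts M. \<Sum>B\<in>insert {} \<tau>. f (add_to \<tau> i B)) = (\<Sum>\<sigma>\<in>Parts (insert i M). f \<sigma>)"
proof -
  have "(\<Sum>\<tau>\<in>Parts M. \<Sum>B\<in>insert {} \<tau>. f (add_to \<tau> i B))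
      = (\<Sum>x\<in>(SIGMA \<tau>:Parts M. insert {} \<tau>). f ((\<lambda>(\<tau>, B). add_to \<tau> i B) x))"
    by (subst sum.Sigma) (auto simp: split_def)
  also have "\<dots> = (\<Sum>\<sigma>\<in>Parts (insert i M). f \<sigma>)"
    by (rule sum.reindex_bij_betw[OF bij_betw_add_to[OF assms]])
  finally show ?thesis .
qed

definition part_trace :: "'a set \<Rightarrow> 'a set set \<Rightarrow> 'a set set" where
  "part_trace X \<sigma> = (\<inter>) X ` \<sigma> - {{}}"

lemma part_trace_add_to:
  assumes "B \<in> insert {} \<tau>" "i \<notin> X"
  shows "part_trace X (add_to \<tau> i B) = part_trace X \<tau>"
proof (cases "B = {}")
  case True
  then show ?thesis
    using assms by (auto simp: part_trace_def add_to_def)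
next
  case False
  then have "B \<in> \<tau>"
    using assms(1) by auto
  then have "(\<inter>) X ` insert (insert i B) (\<tau> - {B}) = (\<inter>) X ` \<tau>"
    using assms(2) by blast
  then show ?thesis
    using False by (simp add: part_trace_def add_to_def)
qed

lemma part_trace_Parts:
  assumes "\<sigma> \<in> Parts X"
  shows "part_trace X \<sigma> = \<sigma>"
proof -
  have "C \<subseteq> X" if "C \<in> \<sigma>" for C
    using assms that by (auto simp: Parts_def partition_on_def)
  then have "(\<inter>) X ` \<sigma> = \<sigma>"
    by (simp add: Int_absorb1)
  moreover have "{} \<notin> \<sigma>"
    using assms by (simp add: Parts_def partition_on_def)
  ultimately show ?thesis
    by (simp add: part_trace_def)
qed

lemma part_trace_empty [simp]: "part_trace {} \<sigma> = {}"
  by (auto simp: part_trace_def)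

lemma prob_mult_restr_p:
  fixes p :: "('a::finite) rpart"
  assumes "positive_rp p" "S \<noteq> {}" "S \<subseteq> N - {i}" "\<sigma> \<in> Parts (N - {i} - S)"
  shows "p (N - {i}) (insert S \<sigma>) * restr_p p N w i S \<sigma>
    = real (card N) / (real (card N) - real (card S))
      * (\<Sum>B\<in>insert {} \<sigma>. p N (insert S (add_to \<sigma> i B)) * w S (add_to \<sigma> i B))"
proof -
  have "p (N - {i}) (insert S \<sigma>) > 0"
    using assms insert_block_in_Parts[of S "N - {i}" \<sigma>] by (simp add: positive_rp_def)
  then show ?thesis
    using assms(2) by (simp add: restr_p_def sum_distrib_left)
qed

lemma binomial_ratio_Suc:
  assumes "s + k < n"
  shows "real (n - 1 choose k) / real (n - 1 - s choose k) * (real n / (real n - real s))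
       = real (n choose Suc k) / real (n - s choose Suc k)"
proof -
  obtain m where m: "n = Suc m"
    using assms by (cases n) auto
  have sm: "s \<le> m" "k \<le> m - s"
    using assms m by auto
  have ns: "n - s = Suc (m - s)" "real n - real s = real (Suc (m - s))"
    using m sm by auto
  have c1: "real (n choose Suc k) = real n * real (m choose k) / real (Suc k)"
    using Suc_times_binomial_eq[of m k] unfolding m
    by (metis of_nat_mult nonzero_eq_divide_eq of_nat_eq_0_iff nat.distinct(1))
  have c2: "real (n - s choose Suc k) = real (n - s) * real (m - s choose k) / real (Suc k)"
    using Suc_times_binomial_eq[of "m - s" k] unfolding ns
    by (metis of_nat_mult nonzero_eq_divide_eq of_nat_eq_0_iff nat.distinct(1))
  have pos: "real (m - s choose k) > 0" "real (n - s) > 0"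
    using sm ns by simp_all
  show ?thesis
    unfolding c1 c2 using pos ns(2) m by (simp add: ns(1) mult.commute)
qed

lemma sum_trace_prob_mult_restr_p:
  fixes p :: "('a::finite) rpart"
  assumes "positive_rp p" "S \<noteq> {}" "S \<subseteq> N - {i}" "i \<in> N" "i \<notin> X"
  shows "(\<Sum>\<sigma>\<in>Parts (N - {i} - S).
      if part_trace X \<sigma> = \<pi> then p (N - {i}) (insert S \<sigma>) * restr_p p N w i S \<sigma> else 0)
    = real (card N) / (real (card N) - real (card S))
      * (\<Sum>\<rho>\<in>Parts (N - S). if part_trace X \<rho> = \<pi> then p N (insert S \<rho>) * w S \<rho> else 0)"
    (is "?L = ?c * _")
proof -
  define f where "f \<rho> = (if part_trace X \<rho> = \<pi> then p N (insert S \<rho>) * w S \<rho> else 0)" for \<rho>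
  have "?L = (\<Sum>\<sigma>\<in>Parts (N - {i} - S). ?c * (\<Sum>B\<in>insert {} \<sigma>. f (add_to \<sigma> i B)))"
  proof (rule sum.cong)
    fix \<sigma> assume \<sigma>: "\<sigma> \<in> Parts (N - {i} - S)"
    have "(\<Sum>B\<in>insert {} \<sigma>. f (add_to \<sigma> i B)) = (if part_trace X \<sigma> = \<pi>
        then \<Sum>B\<in>insert {} \<sigma>. p N (insert S (add_to \<sigma> i B)) * w S (add_to \<sigma> i B) else 0)"
      using assms(5) by (simp add: f_def part_trace_add_to)
    then show "(if part_trace X \<sigma> = \<pi> then p (N - {i}) (insert S \<sigma>) * restr_p p N w i S \<sigma> else 0)
        = ?c * (\<Sum>B\<in>insert {} \<sigma>. f (add_to \<sigma> i B))"
      using prob_mult_restr_p[OF assms(1-3) \<sigma>] by auto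
  qed simp
  also have "\<dots> = ?c * sum f (Parts (N - S))"
  proof -
    have "insert i (N - {i} - S) = N - S"
      using assms(3,4) by auto
    then show ?thesis
      unfolding sum_distrib_left[symmetric] using sum_Parts_insert[of i "N - {i} - S" f] by simp
  qed
  finally show ?thesis
    by (simp add: f_def)
qed

lemma card_plus_length_le:
  fixes N :: "('a::finite) set"
  assumes "distinct xs" "set xs \<subseteq> N" "S \<subseteq> N - set xs"
  shows "card S + length xs \<le> card N"
proof -
  have "card (S \<union> set xs) = card S + length xs"
    using assms by (subst card_Un_disjoint) (auto simp: distinct_card)
  moreover have "card (S \<union> set xs) \<le> card N"
    using assms by (intro card_mono) auto
  ultimately show ?thesis
    by simp
qed

lemma remove_list_mult_prob:
  fixes p :: "('a::finite) rpart"
  assumes "positive_rp p"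
  shows "distinct xs \<Longrightarrow> set xs \<subseteq> N \<Longrightarrow> S \<subseteq> N - set xs \<Longrightarrow> S \<noteq> {} \<Longrightarrow>
    \<pi> \<in> Parts (N - set xs - S) \<Longrightarrow>
    remove_list p N w xs S \<pi> * p (N - set xs) (insert S \<pi>)
    = real (card N choose length xs) / real (card N - card S choose length xs)
      * (\<Sum>\<sigma>\<in>Parts (N - S).
           if part_trace (N - set xs - S) \<sigma> = \<pi> then p N (insert S \<sigma>) * w S \<sigma> else 0)"
proof (induction xs arbitrary: N w)
  case Nil
  have "(\<Sum>\<sigma>\<in>Parts (N - S). if part_trace (N - S) \<sigma> = \<pi> then p N (insert S \<sigma>) * w S \<sigma> else 0)
      = (\<Sum>\<sigma>\<in>Parts (N - S). if \<sigma> = \<pi> then p N (insert S \<sigma>) * w S \<sigma> else 0)"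
    by (rule sum.cong) (simp_all add: part_trace_Parts)
  then show ?case
    using Nil.prems(5) by simp
next
  case (Cons i xs)
  let ?X = "N - set (i # xs) - S"
  have i: "i \<in> N" "i \<notin> ?X"
    and xs: "distinct xs" "set xs \<subseteq> N - {i}" "S \<subseteq> N - {i} - set xs"
    and S: "S \<subseteq> N - {i}"
    using Cons.prems by auto
  have X: "N - {i} - set xs - S = ?X" "N - {i} - set xs = N - set (i # xs)"
    by auto
  have "card S + length (i # xs) \<le> card N"
    using card_plus_length_le[OF Cons.prems(1-3)] .
  then have k: "card S + length xs < card N"
    by simp
  have "remove_list p N w (i # xs) S \<pi> * p (N - set (i # xs)) (insert S \<pi>)
      = remove_list p (N - {i}) (restr_p p N w i) xs S \<pi> * p (N - {i} - set xs) (insert S \<pi>)"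
    using X by simp
  also have "\<dots> = real (card N - 1 choose length xs) / real (card N - 1 - card S choose length xs)
      * (\<Sum>\<sigma>\<in>Parts (N - {i} - S). if part_trace ?X \<sigma> = \<pi>
           then p (N - {i}) (insert S \<sigma>) * restr_p p N w i S \<sigma> else 0)"
    using Cons.IH[OF xs Cons.prems(4)] Cons.prems(5) X i(1) by simp
  finally show ?case
    using sum_trace_prob_mult_restr_p[OF assms Cons.prems(4) S i]
    by (simp only: mult.assoc[symmetric] binomial_ratio_Suc[OF k] length_Cons)
qed

definition block_prob :: "'a rpart \<Rightarrow> 'a set \<Rightarrow> 'a set \<Rightarrow> real" where
  "block_prob p N S = (\<Sum>\<sigma>\<in>Parts (N - S). p N (insert S \<sigma>))"

lemma expect_block_indicator:
  fixes p :: "('a::finite) rpart"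
  assumes "S \<noteq> {}" "S \<subseteq> N"
  shows "expect p N (tu_as_tux (\<lambda>T. if T = S then 1 else 0)) = block_prob p N S"
proof -
  have "expect p N (tu_as_tux (\<lambda>T. if T = S then 1 else 0)) = (\<Sum>\<pi>\<in>Parts N. if S \<in> \<pi> then p N \<pi> else 0)"
    unfolding expect_def tu_as_tux_def by (rule sum.cong) auto
  also have "\<dots> = sum (p N) {\<pi> \<in> Parts N. S \<in> \<pi>}"
    by (simp add: sum.inter_filter)
  also have "\<dots> = block_prob p N S"
    unfolding block_prob_def by (rule sum.reindex_bij_betw[OF bij_betw_insert_block[OF assms], symmetric])
  finally show ?thesis .
qed

lemma block_prob_eq:
  fixes p :: "('a::finite) rpart"
  assumes "generates_potential p" "S \<noteq> {}" "S \<subseteq> N"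
  shows "block_prob p N S = real (fact (card S - 1) * fact (card N - card S)) / real (fact (card N))"
proof -
  let ?v = "\<lambda>T. if T = S then 1 else 0 :: real"
  have "block_prob p N S = Pot N ?v"
    using assms expect_block_indicator[of S N p] by (simp add: generates_potential_def tu_game_def)
  also have "\<dots> = real (fact (card S - 1) * fact (card N - card S)) / real (fact (card N))"
    unfolding Pot_def using assms(2,3) by (simp add: if_distrib[of "(*) _"] cong: if_cong)
  finally show ?thesis .
qed

lemma block_prob_pos:
  fixes p :: "('a::finite) rpart"
  assumes "generates_potential p" "S \<noteq> {}" "S \<subseteq> N"
  shows "block_prob p N S > 0"
  using block_prob_eq[OF assms] by simp

lemma prob_singleton_part:
  fixes p :: "('a::finite) rpart"
  assumes "generates_potential p" "S \<noteq> {}"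
  shows "p S {S} = 1 / real (card S)"
proof -
  have "Parts ({} :: 'a set) = {{}}"
    by (auto simp: Parts_def partition_on_empty)
  then have "p S {S} = block_prob p S S"
    by (simp add: block_prob_def)
  also have "\<dots> = real (fact (card S - 1)) / real (fact (card S))"
    using block_prob_eq[OF assms, of S] by simp
  also have "\<dots> = 1 / real (card S)"
  proof -
    have "card S > 0"
      using assms(2) by (simp add: card_gt_0_iff)
    then show ?thesis
      using fact_reduce[of "card S", where 'a = real] by (simp add: field_simps)
  qed
  finally show ?thesis .
qed

lemma card_mult_binomial_mult_Pot_coeff:
  assumes "0 < s" "s \<le> n"
  shows "real s * real (n choose s) * (real (fact (s - 1) * fact (n - s)) / real (fact n)) = 1"
proof -
  have "(fact s :: real) = real s * fact (s - 1)"
    using assms(1) fact_reduce[of s] by simp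
  then show ?thesis
    using binomial_fact[OF assms(2), where 'a = real] assms(1) by (simp add: field_simps)
qed

lemma remove_list_empty_coalition:
  assumes "\<And>\<pi>. w {} \<pi> = 0"
  shows "remove_list p N w xs {} \<pi> = 0"
  using assms
proof (induction xs arbitrary: N w)
  case (Cons i xs)
  have "restr_p p N w i {} \<pi>' = 0" for \<pi>'
    by (simp add: restr_p_def)
  then show ?case
    using Cons.IH by simp
qed simp

lemma v_restr_empty:
  fixes N :: "('a::finite) set"
  assumes "N \<noteq> {}"
  shows "v_restr p N w {} = 0"
proof -
  obtain xs where xs: "(SOME xs. set xs = N \<and> distinct xs) = xs" "set xs = N"
    using someI_ex[OF finite_distinct_list[of N]] by auto
  then obtain i ys where "xs = i # ys"
    using assms by (cases xs) auto
  moreover have "restr_p p N w i {} \<pi> = 0" for \<pi>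
    by (simp add: restr_p_def)
  ultimately show ?thesis
    using xs remove_list_empty_coalition[of "restr_p p N w i"] by (simp add: v_restr_def remove_set_def)
qed

lemma v_restr_eq_cond_expect:
  fixes p :: "('a::finite) rpart"
  assumes pos: "positive_rp p" and gp: "generates_potential p" and S: "S \<noteq> {}" "S \<subseteq> N"
  shows "v_restr p N w S = (\<Sum>\<sigma>\<in>Parts (N - S). p N (insert S \<sigma>) * w S \<sigma>) / block_prob p N S"
proof -
  let ?E = "\<Sum>\<sigma>\<in>Parts (N - S). p N (insert S \<sigma>) * w S \<sigma>"
  obtain xs where xs: "(SOME xs. set xs = N - S \<and> distinct xs) = xs" "set xs = N - S" "distinct xs"
    using someI_ex[OF finite_distinct_list[of "N - S"]] by auto
  have NS: "N - set xs = S"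
    using xs(2) S(2) by auto
  have len: "length xs = card N - card S"
    using distinct_card[OF xs(3)] xs(2) S(2) by (simp add: card_Diff_subset)
  have "{} \<in> Parts ({} :: 'a set)"
    by (simp add: Parts_def partition_on_empty)
  then have "remove_list p N w xs S {} * p S {S} = real (card N choose (card N - card S)) * ?E"
    using remove_list_mult_prob[OF pos xs(3), of N S "{}" w] xs(2) NS S
    by (simp add: len)
  then have "v_restr p N w S = real (card S) * real (card N choose card S) * ?E"
    using prob_singleton_part[OF gp S(1)] binomial_symmetric[OF card_mono[OF _ S(2)]] S(1) xs(1)
    by (simp add: v_restr_def remove_set_def NS(1) field_simps)
  also have "real (card S) * real (card N choose card S) = 1 / block_prob p N S"
  proof -
    have "real (card S) * real (card N choose card S) * block_prob p N S = 1"
      using card_mult_binomial_mult_Pot_coeff[of "card S" "card N"] block_prob_eq[OF gp S]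
        S card_mono[OF _ S(2)] by (simp add: card_gt_0_iff)
    then show ?thesis
      using block_prob_pos[OF gp S] by (simp add: eq_divide_eq)
  qed
  finally show ?thesis
    by simp
qed

lemma v_restr_tu_as_tux:
  fixes p :: "('a::finite) rpart"
  assumes pos: "positive_rp p" and gp: "generates_potential p" and v: "tu_game N v"
    and "S \<subseteq> N" "N \<noteq> {}"
  shows "v_restr p N (tu_as_tux v) S = v S"
proof (cases "S = {}")
  case True
  then show ?thesis
    using v_restr_empty[OF assms(5)] v by (simp add: tu_game_def)
next
  case False
  have "(\<Sum>\<sigma>\<in>Parts (N - S). p N (insert S \<sigma>) * tu_as_tux v S \<sigma>) = block_prob p N S * v S"
    by (simp add: tu_as_tux_def block_prob_def sum_distrib_right)
  then show ?thesis
    using v_restr_eq_cond_expect[OF pos gp False assms(4)] block_prob_pos[OF gp False assms(4)] by simp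
qed

lemma Shapley_r_tu_as_tux:
  fixes p :: "('a::finite) rpart"
  assumes "positive_rp p" "generates_potential p" "tu_game N v" "i \<in> N"
  shows "Shapley_r p N (tu_as_tux v) i = Shapley N v i"
  unfolding Shapley_r_def Shapley_def
proof (rule sum.cong)
  fix T assume "T \<in> Pow (N - {i})"
  then have "insert i T \<subseteq> N" "T \<subseteq> N" "N \<noteq> {}"
    using assms(4) by auto
  then show "real (fact (card T) * fact (card N - card T - 1)) / real (fact (card N))
        * (v_restr p N (tu_as_tux v) (insert i T) - v_restr p N (tu_as_tux v) T)
      = real (fact (card T) * fact (card N - card T - 1)) / real (fact (card N)) * (v (insert i T) - v T)"
    using v_restr_tu_as_tux[OF assms(1-3)] by simp
qed simp

lemma Shapley_coeff_div_Pot_coeff: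
  assumes "0 < t" "t < n"
  shows "real (fact t * fact (n - t - 1)) / real (fact n) / (real (fact (t - 1) * fact (n - t)) / real (fact n))
    = real t / (real n - real t)"
proof -
  have "(fact t :: real) = real t * fact (t - 1)" "(fact (n - t) :: real) = real (n - t) * fact (n - t - 1)"
    using assms fact_reduce[of t, where 'a = real] fact_reduce[of "n - t", where 'a = real] by simp_all
  then show ?thesis
    using assms by (simp add: of_nat_diff)
qed

lemma Shapley_coeff_mult_v_restr_insert:
  fixes p :: "('a::finite) rpart"
  assumes "positive_rp p" "generates_potential p" "i \<in> N" "T \<subseteq> N - {i}"
  shows "real (fact (card T) * fact (card N - card T - 1)) / real (fact (card N)) * v_restr p N w (insert i T)
    = (\<Sum>\<sigma>\<in>Parts (N - insert i T). p N (insert (insert i T) \<sigma>) * w (insert i T) \<sigma>)"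
proof -
  have iT: "insert i T \<noteq> {}" "insert i T \<subseteq> N"
    using assms(3,4) by auto
  have "i \<notin> T"
    using assms(4) by auto
  then have "card (insert i T) = Suc (card T)"
    by simp
  then have "real (fact (card T) * fact (card N - card T - 1)) / real (fact (card N)) = block_prob p N (insert i T)"
    using block_prob_eq[OF assms(2) iT] by simp
  then show ?thesis
    using v_restr_eq_cond_expect[OF assms(1,2) iT] block_prob_pos[OF assms(2) iT] by simp
qed

lemma Shapley_coeff_mult_v_restr:
  fixes p :: "('a::finite) rpart"
  assumes "positive_rp p" "generates_potential p" "i \<in> N" "T \<subseteq> N - {i}"
  shows "real (fact (card T) * fact (card N - card T - 1)) / real (fact (card N)) * v_restr p N w T
    = real (card T) / (real (card N) - real (card T)) * (\<Sum>\<sigma>\<in>Parts (N - T). p N (insert T \<sigma>) * w T \<sigma>)"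
proof (cases "T = {}")
  case True
  then show ?thesis
    using v_restr_empty[of N] assms(3) by auto
next
  case False
  let ?W = "real (fact (card T) * fact (card N - card T - 1)) / real (fact (card N))"
  have TN: "T \<subseteq> N" "0 < card T" "card T < card N"
    using assms(3,4) False by (auto simp: card_gt_0_iff intro: psubset_card_mono)
  have "?W / block_prob p N T = real (card T) / (real (card N) - real (card T))"
    using Shapley_coeff_div_Pot_coeff[OF TN(2,3)] block_prob_eq[OF assms(2) False TN(1)] by simp
  then have "?W = real (card T) / (real (card N) - real (card T)) * block_prob p N T"
    using block_prob_pos[OF assms(2) False TN(1)] by (simp add: divide_eq_eq)
  then show ?thesis
    using v_restr_eq_cond_expect[OF assms(1,2) False TN(1)] block_prob_pos[OF assms(2) False TN(1)] by simp
qed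

lemma Shapley_p_summand_eq:
  fixes p :: "('a::finite) rpart"
  assumes "positive_rp p" "generates_potential p" "i \<in> N" "T \<subseteq> N - {i}"
  shows "(\<Sum>\<tau>\<in>Parts (N - {i} - T). p N (insert (insert i T) \<tau>) * w (insert i T) \<tau>
      - real (card T) / (real (card N) - real (card T)) *
        (\<Sum>B\<in>insert {} \<tau>. p N (insert T (add_to \<tau> i B)) * w T (add_to \<tau> i B)))
    = real (fact (card T) * fact (card N - card T - 1)) / real (fact (card N))
      * (v_restr p N w (insert i T) - v_restr p N w T)"
    (is "(\<Sum>\<tau>\<in>_. ?a \<tau> - ?c * (\<Sum>B\<in>_. ?g (add_to \<tau> i B))) = ?W * _")
proof -
  have N: "N - {i} - T = N - insert i T" "insert i (N - {i} - T) = N - T"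
    using assms(3,4) by auto
  have "(\<Sum>\<tau>\<in>Parts (N - {i} - T). ?a \<tau> - ?c * (\<Sum>B\<in>insert {} \<tau>. ?g (add_to \<tau> i B)))
      = (\<Sum>\<tau>\<in>Parts (N - {i} - T). ?a \<tau>) - ?c * (\<Sum>\<tau>\<in>Parts (N - {i} - T). \<Sum>B\<in>insert {} \<tau>. ?g (add_to \<tau> i B))"
    by (simp add: sum_subtractf sum_distrib_left)
  also have "\<dots> = (\<Sum>\<tau>\<in>Parts (N - insert i T). ?a \<tau>) - ?c * (\<Sum>\<sigma>\<in>Parts (N - T). ?g \<sigma>)"
    using sum_Parts_insert[of i "N - {i} - T" ?g] N by simp
  also have "\<dots> = ?W * v_restr p N w (insert i T) - ?W * v_restr p N w T"
    using Shapley_coeff_mult_v_restr_insert[OF assms] Shapley_coeff_mult_v_restr[OF assms] by simp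
  finally show ?thesis
    by (simp add: right_diff_distrib)
qed

lemma Shapley_r_eq_Shapley_p:
  fixes p :: "('a::finite) rpart"
  assumes "positive_rp p" "generates_potential p" "i \<in> N"
  shows "Shapley_r p N w i = Shapley_p p N w i"
proof -
  have "emb_coal (N - {i}) = (SIGMA T:Pow (N - {i}). Parts (N - {i} - T))"
    by (auto simp: emb_coal_def)
  then have "Shapley_p p N w i = (\<Sum>T\<in>Pow (N - {i}). \<Sum>\<tau>\<in>Parts (N - {i} - T).
      p N (insert (insert i T) \<tau>) * w (insert i T) \<tau>
      - real (card T) / (real (card N) - real (card T)) *
        (\<Sum>B\<in>insert {} \<tau>. p N (insert T (add_to \<tau> i B)) * w T (add_to \<tau> i B)))"
    unfolding Shapley_p_def by (subst sum.Sigma) auto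
  also have "\<dots> = Shapley_r p N w i"
    unfolding Shapley_r_def Shapley_def by (rule sum.cong[OF refl], rule Shapley_p_summand_eq[OF assms]) auto
  finally show ?thesis
    by simp
qed

theorem corollary2:
  fixes p :: "('a::finite) rpart"
  assumes "random_partition p"
    and "positive_rp p"
    and "generates_potential p"
  shows "(\<forall>N w i. tux_game N w \<longrightarrow> i \<in> N \<longrightarrow> Shapley_r p N w i = Shapley_p p N w i)
       \<and> (\<forall>N v i. tu_game N v \<longrightarrow> i \<in> N \<longrightarrow> Shapley_r p N (tu_as_tux v) i = Shapley N v i)"
  using Shapley_r_eq_Shapley_p[OF assms(2,3)] Shapley_r_tu_as_tux[OF assms(2,3)] by blast

end
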